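(* Let $S$ be a finite set with $|S|=\kappa$, and let $r:S\times S\to[0,\infty)$ satisfy $r(x,y)>0$ for all distinct $x,y\in S$ (and $r(x,x)=0$). Consider the inclusion process on $S$ with underlying rates $r$ and parameter $d_N>0$ such that $$\lim_{N\to\infty}d_NN^{\kappa+2}(\log N)^{\kappa-3}=0.$$ Then $\lim_{N\to\infty}\mu_N(\mathcal E_N)=1$.
   Context: $\mathcal H_N=\{\eta\in\{0,1,2,\dots\}^S:\sum_{x\in S}\eta_x=N\}$; for $\eta$ with $\eta_x\ge1$, $\sigma^{x,y}\eta$ is obtained by moving one particle from $x$ to $y$ ($\sigma^{x,y}\eta=\eta$ if $\eta_x=0$). The inclusion process is the continuous-time Markov chain on $\mathcal H_N$ with generator $(\mathcal L_NF)(\eta)=\sum_{x\ne y}\eta_x(d_N+\eta_y)r(x,y)\{F(\sigma^{x,y}\eta)-F(\eta)\}$; $\mu_N$ is its unique invariant probability measure. $\xi_N^x$ is the configuration with all $N$ particles at $x$ and $\mathcal E_N=\{\xi_N^x:x\in S\}$. *)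

theory Defs
  imports "HOL-Analysis.Analysis"
begin

definition config_space :: "nat \<Rightarrow> ('a::finite \<Rightarrow> nat) set" where
  "config_space N = {\<eta>. (\<Sum>x\<in>UNIV. \<eta> x) = N}"

definition move :: "'a \<Rightarrow> 'a \<Rightarrow> ('a \<Rightarrow> nat) \<Rightarrow> ('a \<Rightarrow> nat)" where
  "move x y \<eta> = (if 1 \<le> \<eta> x then (\<eta>(x := \<eta> x - 1))(y := \<eta> y + 1) else \<eta>)"

definition incl_gen :: "real \<Rightarrow> ('a::finite \<Rightarrow> 'a \<Rightarrow> real) \<Rightarrow> (('a \<Rightarrow> nat) \<Rightarrow> real)
    \<Rightarrow> ('a \<Rightarrow> nat) \<Rightarrow> real" where
  "incl_gen dN r F \<eta> =
     (\<Sum>x\<in>UNIV. \<Sum>y\<in>UNIV - {x}.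
        real (\<eta> x) * (dN + real (\<eta> y)) * r x y * (F (move x y \<eta>) - F \<eta>))"

definition invariant_prob :: "nat \<Rightarrow> real \<Rightarrow> ('a::finite \<Rightarrow> 'a \<Rightarrow> real)
    \<Rightarrow> (('a \<Rightarrow> nat) \<Rightarrow> real) \<Rightarrow> bool" where
  "invariant_prob N dN r \<mu> \<longleftrightarrow>
     (\<forall>\<eta>. 0 \<le> \<mu> \<eta>) \<and> (\<forall>\<eta>. \<eta> \<notin> config_space N \<longrightarrow> \<mu> \<eta> = 0) \<and>
     (\<Sum>\<eta>\<in>config_space N. \<mu> \<eta>) = 1 \<and>
     (\<forall>F. (\<Sum>\<eta>\<in>config_space N. \<mu> \<eta> * incl_gen dN r F \<eta>) = 0)"

text \<open>The set E_N of configurations with all N particles on one site.\<close>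
definition condensed :: "nat \<Rightarrow> ('a \<Rightarrow> nat) set" where
  "condensed N = {(\<lambda>y. if y = x then N else 0) | x. True}"

end

theory Submission
  imports Defs
begin

(* The proof only uses d_N N^3 -> 0, which the hypothesis implies as soon as |S| >= 2 (for |S| = 1
   every configuration is condensed).

   For every nonempty set A of sites fix an optimal strategy w_A of the symmetric zero-sum game
   with skew-symmetric payoff r(x,y) - r(y,x) restricted to A; it exists by Nash's Brouwer
   argument. With the harmonic numbers H consider the Lyapunov function

     F(eta) = (N+1) |supp eta| + sum_z w_{supp eta}(z) H(eta_z).

   A jump x -> y between occupied sites changes F by at most w(y)/(eta_y + 1) - w(x)/eta_x.
   Weighted with the zero-range rates eta_x eta_y r(x,y), optimality of w makes the antisymmetric
   part of this drift nonpositive, and the remainder is at most -min r/(N+1) unless eta is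
   condensed. The d_N part of the generator contributes O(d_N N^2) since 0 <= F = O(N).
   Integrating L_N F against the invariant measure, which gives 0, yields
   mu_N(E_N^c) = O(d_N N^3). *)

lemma harm_le: "harm n \<le> (real n :: real)"
proof -
  have "harm n \<le> (\<Sum>k<n. 1 :: real)"
    unfolding harm_altdef by (intro sum_mono) (simp add: inverse_le_1_iff)
  then show ?thesis
    by simp
qed

lemma polynomial_le_four_cube:
  fixes n k :: real
  assumes "1 \<le> n" "0 \<le> k"
  shows "n * ((n + 1) * k + n) * (n + 1) \<le> 4 * (k + 1) * n ^ 3"
proof -
  have "k * 1 \<le> k * n"
    using assms by (intro mult_left_mono) simp_all
  then have "(n + 1) * k + n \<le> 2 * n * (k + 1)"
    using assms(1) by (simp add: algebra_simps)
  moreover have "n + 1 \<le> 2 * n"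
    using assms by simp
  ultimately have "n * ((n + 1) * k + n) * (n + 1) \<le> n * (2 * n * (k + 1)) * (2 * n)"
    using assms by (intro mult_mono mult_left_mono) simp_all
  then show ?thesis
    by (simp add: power3_eq_cube algebra_simps)
qed

lemma cube_le_power_ln_powr:
  fixes k N :: nat
  assumes "2 \<le> k" "3 \<le> N"
  shows "real N ^ 3 \<le> real N ^ (k + 2) * ln (real N) powr (real k - 3)"
proof (cases "k = 2")
  case True
  have "0 < ln (real N)" "ln (real N) \<le> real N"
    using assms(2) ln_le_minus_one[of "real N"] by auto
  then show ?thesis
    using True by (simp add: powr_minus_divide field_simps eval_nat_numeral)
next
  case False
  have "exp 1 \<le> real N"
    using exp_le assms(2) by linarith
  then have "1 \<le> ln (real N)"
    using assms(2) by (subst ln_ge_iff) auto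
  then have "1 \<le> ln (real N) powr (real k - 3)"
    using False assms(1) by (intro ge_one_powr_ge_zero) auto
  then have "real N ^ (k + 2) * 1 \<le> real N ^ (k + 2) * ln (real N) powr (real k - 3)"
    by (intro mult_left_mono) simp_all
  moreover have "real N ^ 3 \<le> real N ^ (k + 2)"
    using assms by (intro power_increasing) auto
  ultimately show ?thesis
    by linarith
qed

lemma tendsto_cube_if_tendsto_power_ln_powr:
  fixes d :: "nat \<Rightarrow> real" and k :: nat
  assumes "2 \<le> k" "\<And>N. 0 \<le> d N"
    and "(\<lambda>N. d N * real N ^ (k + 2) * ln (real N) powr (real k - 3)) \<longlonglongrightarrow> 0"
  shows "(\<lambda>N. d N * real N ^ 3) \<longlonglongrightarrow> 0"
proof (rule tendsto_sandwich[OF _ _ tendsto_const assms(3)])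
  show "\<forall>\<^sub>F N in sequentially. 0 \<le> d N * real N ^ 3"
    using assms(2) by simp
  show "\<forall>\<^sub>F N in sequentially. d N * real N ^ 3 \<le> d N * real N ^ (k + 2) * ln (real N) powr (real k - 3)"
    using eventually_ge_at_top[of 3]
    by eventually_elim (use assms cube_le_power_ln_powr in \<open>simp add: mult.assoc mult_left_mono\<close>)
qed

section \<open>Optimal strategies of skew-symmetric games\<close>

definition optimal_strategy :: "('a::finite \<Rightarrow> 'a \<Rightarrow> real) \<Rightarrow> 'a set \<Rightarrow> ('a \<Rightarrow> real) \<Rightarrow> bool" where
  "optimal_strategy B S p \<longleftrightarrow>
     (\<forall>x. 0 \<le> p x) \<and> (\<forall>x. x \<notin> S \<longrightarrow> p x = 0) \<and> sum p UNIV = 1 \<and>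
     (\<forall>x\<in>S. (\<Sum>y\<in>UNIV. B x y * p y) \<le> 0)"

lemma skew_quadratic_form_eq_0:
  fixes B :: "'a \<Rightarrow> 'a \<Rightarrow> real"
  assumes "\<And>x y. B x y = - B y x"
  shows "(\<Sum>x\<in>A. p x * (\<Sum>y\<in>A. B x y * p y)) = 0"
proof -
  define D where "D = (\<Sum>x\<in>A. \<Sum>y\<in>A. p x * B x y * p y)"
  have antisym: "p x * B x y * p y = - (p y * B y x * p x)" for x y
    using assms[of x y] by simp
  have "D = (\<Sum>y\<in>A. \<Sum>x\<in>A. p x * B x y * p y)"
    unfolding D_def by (rule sum.swap)
  also have "\<dots> = (\<Sum>y\<in>A. \<Sum>x\<in>A. - (p y * B y x * p x))"
    by (intro sum.cong refl antisym)
  also have "\<dots> = - D"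
    by (simp add: D_def sum_negf)
  finally have "D = 0" by simp
  then show ?thesis
    by (simp add: D_def sum_distrib_left mult.assoc)
qed

definition simplex_on :: "'a::finite set \<Rightarrow> (real^'a) set" where
  "simplex_on S = {p. (\<forall>x. 0 \<le> p$x) \<and> (\<forall>x. x \<notin> S \<longrightarrow> p$x = 0) \<and> (\<Sum>x\<in>UNIV. p$x) = 1}"

lemma compact_simplex_on: "compact (simplex_on S)"
proof -
  have "simplex_on S = (\<Inter>x. {p. 0 \<le> p$x}) \<inter> (\<Inter>x\<in>-S. {p. p$x = 0}) \<inter> {p. (\<Sum>x\<in>UNIV. p$x) = 1}"
    unfolding simplex_on_def by auto
  then have "closed (simplex_on S)"
    by (auto intro!: closed_Int closed_INT closed_Collect_le closed_Collect_eq continuous_intros)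
  moreover have "simplex_on S \<subseteq> cball 0 1"
  proof
    fix p assume "p \<in> simplex_on S"
    then have "(\<Sum>x\<in>UNIV. \<bar>p$x\<bar>) = 1"
      by (simp add: simplex_on_def)
    with norm_le_l1_cart[of p] show "p \<in> cball 0 1"
      by simp
  qed
  ultimately show ?thesis
    using bounded_cball bounded_subset compact_eq_bounded_closed by blast
qed

lemma convex_simplex_on: "convex (simplex_on S)"
  unfolding convex_def simplex_on_def
  by (auto simp: sum.distrib sum_distrib_left[symmetric])

lemma simplex_on_nonempty:
  assumes "S \<noteq> {}"
  shows "simplex_on S \<noteq> {}"
proof -
  obtain s where "s \<in> S"
    using assms by blast
  then have "axis s 1 \<in> simplex_on S"
    by (auto simp: simplex_on_def axis_def)
  then show ?thesis
    by blast
qed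

definition nash_gain :: "('a::finite \<Rightarrow> 'a \<Rightarrow> real) \<Rightarrow> 'a set \<Rightarrow> real^'a \<Rightarrow> 'a \<Rightarrow> real" where
  "nash_gain B S p x = (if x \<in> S then max 0 (\<Sum>y\<in>UNIV. B x y * p$y) else 0)"

definition nash_map :: "('a::finite \<Rightarrow> 'a \<Rightarrow> real) \<Rightarrow> 'a set \<Rightarrow> real^'a \<Rightarrow> real^'a" where
  "nash_map B S p = (\<chi> x. (p$x + nash_gain B S p x) / (1 + sum (nash_gain B S p) UNIV))"

lemma nash_gain_nonneg: "0 \<le> nash_gain B S p x"
  by (simp add: nash_gain_def)

lemma nash_normalizer_pos: "0 < 1 + sum (nash_gain B S p) UNIV"
  by (metis add_pos_nonneg nash_gain_nonneg sum_nonneg zero_less_one)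

lemma continuous_on_nash_map: "continuous_on A (nash_map B S)"
proof -
  have gain: "continuous_on A (\<lambda>p. nash_gain B S p x)" for x
    by (cases "x \<in> S") (auto simp: nash_gain_def intro!: continuous_intros)
  show ?thesis
    unfolding nash_map_def
    by (intro continuous_on_vec_lambda continuous_intros gain) (metis nash_normalizer_pos less_irrefl)
qed

lemma nash_map_simplex_on:
  assumes "p \<in> simplex_on S"
  shows "nash_map B S p \<in> simplex_on S"
proof -
  have "(\<Sum>x\<in>UNIV. p$x + nash_gain B S p x) = 1 + sum (nash_gain B S p) UNIV"
    using assms by (simp add: simplex_on_def sum.distrib)
  then show ?thesis
    using assms nash_normalizer_pos[of B S p] nash_gain_nonneg[of B S p]
    by (auto simp: simplex_on_def nash_map_def sum_divide_distrib[symmetric])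
      (simp add: nash_gain_def)
qed

text \<open>At a fixed point the gains are proportional to the strategy; pairing them with the
  payoff vector gives their sum of squares on one side and, by skew-symmetry, zero on the other.\<close>
lemma nash_map_fixed_point:
  assumes skew: "\<And>x y. B x y = - B y x"
    and p: "p \<in> simplex_on S" "nash_map B S p = p"
  shows "optimal_strategy B S (\<lambda>x. p$x)"
proof -
  define g where "g = sum (nash_gain B S p) UNIV"
  have "p$x = (p$x + nash_gain B S p x) / (1 + g)" for x
    using p(2) unfolding nash_map_def g_def by (metis vec_lambda_beta)
  then have gain_eq: "nash_gain B S p x = g * p$x" for x
    using nash_normalizer_pos[of B S p] unfolding g_def[symmetric] by (simp add: field_simps)
  have "nash_gain B S p x ^ 2 = nash_gain B S p x * (\<Sum>y\<in>UNIV. B x y * p$y)" for x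
    by (simp add: nash_gain_def power2_eq_square max_def)
  then have "(\<Sum>x\<in>UNIV. nash_gain B S p x ^ 2) = g * (\<Sum>x\<in>UNIV. p$x * (\<Sum>y\<in>UNIV. B x y * p$y))"
    by (simp add: gain_eq sum_distrib_left mult.assoc)
  also have "\<dots> = 0"
    using skew_quadratic_form_eq_0[of B, OF skew] by simp
  finally have gain_0: "nash_gain B S p x = 0" for x
    using sum_nonneg_eq_0_iff[of UNIV "\<lambda>x. nash_gain B S p x ^ 2"] by simp
  have "(\<Sum>y\<in>UNIV. B x y * p$y) \<le> 0" if "x \<in> S" for x
    using that gain_0[of x] by (simp add: nash_gain_def max_def split: if_splits)
  then show ?thesis
    using p(1) by (simp add: optimal_strategy_def simplex_on_def)
qed

lemma optimal_strategy_exists: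
  fixes B :: "'a::finite \<Rightarrow> 'a \<Rightarrow> real"
  assumes skew: "\<And>x y. B x y = - B y x" and "S \<noteq> {}"
  shows "\<exists>p. optimal_strategy B S p"
proof -
  obtain p where "p \<in> simplex_on S" "nash_map B S p = p"
    using brouwer[OF compact_simplex_on convex_simplex_on simplex_on_nonempty[OF assms(2)]
        continuous_on_nash_map] nash_map_simplex_on by blast
  then show ?thesis
    using nash_map_fixed_point[of B, OF skew] by blast
qed

section \<open>Configurations and the generator\<close>

definition occupied :: "('a \<Rightarrow> nat) \<Rightarrow> 'a set" where
  "occupied \<eta> = {x. \<eta> x \<noteq> 0}"

lemma config_space_le:
  fixes \<eta> :: "'a::finite \<Rightarrow> nat"
  assumes "\<eta> \<in> config_space N"
  shows "\<eta> x \<le> N"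
  using assms member_le_sum[of x UNIV \<eta>] by (simp add: config_space_def)

lemma finite_config_space: "finite (config_space N :: ('a::finite \<Rightarrow> nat) set)"
proof (rule finite_subset)
  show "config_space N \<subseteq> PiE UNIV (\<lambda>_::'a. {..N})"
    using config_space_le by (auto simp: PiE_def extensional_def)
qed (simp add: finite_PiE)

lemma sum_move:
  fixes \<eta> :: "'a::finite \<Rightarrow> nat"
  assumes "x \<noteq> y"
  shows "sum (move x y \<eta>) UNIV = sum \<eta> UNIV"
proof (cases "\<eta> x = 0")
  case False
  then have "move x y \<eta> z + of_bool (z = x) = \<eta> z + of_bool (z = y)" for z
    using assms by (auto simp: move_def)
  then have "(\<Sum>z\<in>UNIV. move x y \<eta> z + of_bool (z = x)) = (\<Sum>z\<in>UNIV. \<eta> z + of_bool (z = y))"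
    by simp
  then show ?thesis
    by (simp add: sum.distrib)
qed (simp add: move_def)

lemma move_in_config_space: "x \<noteq> y \<Longrightarrow> \<eta> \<in> config_space N \<Longrightarrow> move x y \<eta> \<in> config_space N"
  by (simp add: config_space_def sum_move)

lemma occupied_nonempty:
  assumes "\<eta> \<in> config_space N" "0 < N"
  shows "occupied \<eta> \<noteq> {}"
proof
  assume "occupied \<eta> = {}"
  then have "\<eta> = (\<lambda>_. 0)"
    by (auto simp: occupied_def)
  with assms show False
    by (simp add: config_space_def)
qed

lemma occupied_move:
  assumes "x \<noteq> y" "\<eta> x \<noteq> 0" "\<eta> y \<noteq> 0"
  shows "occupied (move x y \<eta>) = (if \<eta> x = 1 then occupied \<eta> - {x} else occupied \<eta>)"
  using assms by (auto simp: occupied_def move_def)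

lemma condensed_subset_config_space: "condensed N \<subseteq> config_space N"
  by (auto simp: condensed_def config_space_def)

lemma two_occupied_if_not_condensed:
  fixes \<eta> :: "'a::finite \<Rightarrow> nat"
  assumes "\<eta> \<in> config_space N" "\<eta> \<notin> condensed N"
  shows "\<exists>a b. a \<noteq> b \<and> \<eta> a \<noteq> 0 \<and> \<eta> b \<noteq> 0"
proof (rule ccontr)
  assume "\<not> ?thesis"
  then obtain a where a: "\<And>b. b \<noteq> a \<Longrightarrow> \<eta> b = 0"
    by (metis (full_types))
  then have "sum \<eta> UNIV = sum \<eta> {a}"
    by (intro sum.mono_neutral_right) auto
  with assms(1) a have "\<eta> = (\<lambda>y. if y = a then N else 0)"
    by (auto simp: config_space_def)
  with assms(2) show False
    by (auto simp: condensed_def)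
qed

lemma config_space_diff_condensed_card_1:
  assumes "CARD('a::finite) = 1"
  shows "config_space N - condensed N = ({} :: ('a \<Rightarrow> nat) set)"
proof -
  obtain u :: 'a where u: "UNIV = {u}"
    using assms by (rule card_1_singletonE)
  have "\<eta> \<in> condensed N" if \<eta>: "\<eta> \<in> config_space N" for \<eta> :: "'a \<Rightarrow> nat"
  proof (rule ccontr)
    assume "\<eta> \<notin> condensed N"
    with \<eta> obtain a b :: 'a where "a \<noteq> b"
      using two_occupied_if_not_condensed by blast
    with u show False
      by (metis UNIV_I singletonD)
  qed
  then show ?thesis
    by blast
qed

lemma incl_gen_eq:
  assumes "\<And>x. r x x = 0"
  shows "incl_gen dN r F \<eta> =
      (\<Sum>x\<in>UNIV. \<Sum>y\<in>UNIV. real (\<eta> x) * real (\<eta> y) * r x y * (F (move x y \<eta>) - F \<eta>))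
      + dN * (\<Sum>x\<in>UNIV. \<Sum>y\<in>UNIV. real (\<eta> x) * r x y * (F (move x y \<eta>) - F \<eta>))"
  by (simp add: incl_gen_def sum_diff1 assms sum.distrib[symmetric] sum_distrib_left algebra_simps)

lemma invariant_prob_mass_diff:
  assumes "invariant_prob N dN r \<mu>" "A \<subseteq> config_space N"
  shows "(\<Sum>\<eta>\<in>A. \<mu> \<eta>) = 1 - (\<Sum>\<eta>\<in>config_space N - A. \<mu> \<eta>)"
  using assms sum_diff[OF finite_config_space assms(2), of \<mu>] by (simp add: invariant_prob_def)

lemma invariant_prob_drift_bound:
  assumes inv: "invariant_prob N dN r \<mu>"
    and drift: "\<And>\<eta>. \<eta> \<in> config_space N \<Longrightarrow> incl_gen dN r F \<eta> \<le> c - (if \<eta> \<in> A then 0 else a)"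
  shows "(\<Sum>\<eta>\<in>config_space N - A. \<mu> \<eta>) * a \<le> c"
proof -
  define C where "C = (config_space N :: ('a \<Rightarrow> nat) set)"
  have \<mu>: "\<And>\<eta>. 0 \<le> \<mu> \<eta>" "(\<Sum>\<eta>\<in>C. \<mu> \<eta>) = 1" "(\<Sum>\<eta>\<in>C. \<mu> \<eta> * incl_gen dN r F \<eta>) = 0"
    using inv by (auto simp: invariant_prob_def C_def)
  have "0 = (\<Sum>\<eta>\<in>C. \<mu> \<eta> * incl_gen dN r F \<eta>)"
    using \<mu>(3) by simp
  also have "\<dots> \<le> (\<Sum>\<eta>\<in>C. \<mu> \<eta> * (c - (if \<eta> \<in> A then 0 else a)))"
    using drift \<mu>(1) by (intro sum_mono mult_left_mono) (auto simp: C_def)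
  also have "\<dots> = (\<Sum>\<eta>\<in>C. c * \<mu> \<eta> - (if \<eta> \<in> A then 0 else \<mu> \<eta> * a))"
    by (intro sum.cong) (auto simp: algebra_simps)
  also have "\<dots> = c - (\<Sum>\<eta>\<in>C. if \<eta> \<in> A then 0 else \<mu> \<eta> * a)"
    by (simp add: sum_subtractf sum_distrib_left[symmetric] \<mu>(2))
  also have "(\<Sum>\<eta>\<in>C. if \<eta> \<in> A then 0 else \<mu> \<eta> * a) = (\<Sum>\<eta>\<in>C - A. \<mu> \<eta>) * a"
    by (simp add: sum.If_cases finite_config_space C_def sum_distrib_right Diff_eq)
  finally show ?thesis
    by (simp add: C_def)
qed

section \<open>The Lyapunov function\<close>

lemma zero_range_drift_eq:
  fixes e w :: "'a::finite \<Rightarrow> real"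
  assumes "\<And>x. 0 \<le> e x" and "\<And>x. e x = 0 \<Longrightarrow> w x = 0"
  shows "(\<Sum>x\<in>UNIV. \<Sum>y\<in>UNIV. e x * e y * r x y * (w y / (e y + 1) - w x / e x))
       = (\<Sum>x\<in>UNIV. e x * (\<Sum>y\<in>UNIV. (r x y - r y x) * w y))
         - (\<Sum>y\<in>UNIV. w y * (\<Sum>x\<in>UNIV. r x y * e x / (e y + 1)))"
proof -
  have pointwise: "e x * e y * r x y * (w y / (e y + 1) - w x / e x)
      = (r x y - r y x) * w y * e x - (r x y * w x * e y - r y x * w y * e x)
        - w y * (r x y * e x / (e y + 1))" for x y
  proof (cases "e x = 0")
    case False
    moreover have "e y + 1 \<noteq> 0"
      using assms(1)[of y] by linarith
    ultimately show ?thesis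
      by (simp add: divide_simps) (simp add: algebra_simps)
  qed (simp add: assms(2))
  have reversed: "(\<Sum>x\<in>UNIV. \<Sum>y\<in>UNIV. r y x * w y * e x) = (\<Sum>x\<in>UNIV. \<Sum>y\<in>UNIV. r x y * w x * e y)"
    by (rule sum.swap)
  have antisymmetric_part: "(\<Sum>x\<in>UNIV. \<Sum>y\<in>UNIV. (r x y - r y x) * w y * e x)
      = (\<Sum>x\<in>UNIV. e x * (\<Sum>y\<in>UNIV. (r x y - r y x) * w y))"
    by (simp add: sum_distrib_left mult_ac)
  have escape_part: "(\<Sum>x\<in>UNIV. \<Sum>y\<in>UNIV. w y * (r x y * e x / (e y + 1)))
      = (\<Sum>y\<in>UNIV. w y * (\<Sum>x\<in>UNIV. r x y * e x / (e y + 1)))"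
    by (subst sum.swap) (simp add: sum_distrib_left)
  show ?thesis
    unfolding pointwise sum_subtractf reversed antisymmetric_part escape_part by simp
qed

locale inclusion_rates =
  fixes r :: "'a::finite \<Rightarrow> 'a \<Rightarrow> real"
  assumes rate_pos: "\<And>x y. x \<noteq> y \<Longrightarrow> 0 < r x y"
    and rate_diag: "\<And>x. r x x = 0"
begin

lemma rate_nonneg: "0 \<le> r x y"
  using rate_pos[of x y] by (cases "x = y") (auto simp: rate_diag)

lemma rate_lower_bound:
  obtains \<rho> where "0 < \<rho>" "\<And>x y. x \<noteq> y \<Longrightarrow> \<rho> \<le> r x y"
proof -
  define R where "R = insert 1 ((\<lambda>(x, y). r x y) ` {(x, y). x \<noteq> y})"
  have "finite R"
    by (simp add: R_def)
  show thesis
  proof (rule that)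
    show "0 < Min R"
      using \<open>finite R\<close> rate_pos by (auto simp: R_def)
    show "Min R \<le> r x y" if "x \<noteq> y" for x y
      using \<open>finite R\<close> that by (intro Min_le) (auto simp: R_def)
  qed
qed

definition weight :: "('a \<Rightarrow> nat) \<Rightarrow> 'a \<Rightarrow> real" where
  "weight \<eta> = (SOME p. optimal_strategy (\<lambda>x y. r x y - r y x) (occupied \<eta>) p)"

lemma optimal_strategy_weight:
  assumes "occupied \<eta> \<noteq> {}"
  shows "optimal_strategy (\<lambda>x y. r x y - r y x) (occupied \<eta>) (weight \<eta>)"
proof -
  have "\<exists>p. optimal_strategy (\<lambda>x y. r x y - r y x) (occupied \<eta>) p"
    by (rule optimal_strategy_exists) (simp_all add: assms)
  then show ?thesis
    unfolding weight_def by (rule someI_ex)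
qed

lemma
  assumes "occupied \<eta> \<noteq> {}"
  shows weight_nonneg: "0 \<le> weight \<eta> x"
    and weight_eq_0: "\<eta> x = 0 \<Longrightarrow> weight \<eta> x = 0"
    and sum_weight: "sum (weight \<eta>) UNIV = 1"
    and weight_le_1: "weight \<eta> x \<le> 1"
    and weight_drift: "\<eta> x \<noteq> 0 \<Longrightarrow> (\<Sum>y\<in>UNIV. (r x y - r y x) * weight \<eta> y) \<le> 0"
proof -
  note opt = optimal_strategy_weight[OF assms, unfolded optimal_strategy_def]
  show "0 \<le> weight \<eta> x" "\<eta> x = 0 \<Longrightarrow> weight \<eta> x = 0" "sum (weight \<eta>) UNIV = 1"
    "\<eta> x \<noteq> 0 \<Longrightarrow> (\<Sum>y\<in>UNIV. (r x y - r y x) * weight \<eta> y) \<le> 0"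
    using opt by (auto simp: occupied_def)
  show "weight \<eta> x \<le> 1"
    using opt member_le_sum[of x UNIV "weight \<eta>"] by auto
qed

text \<open>The term (N+1) |occupied \<eta>| pays for the jumps which empty a site, where the
  harmonic part alone could increase.\<close>
definition lyapunov :: "nat \<Rightarrow> ('a \<Rightarrow> nat) \<Rightarrow> real" where
  "lyapunov N \<eta> = real (N + 1) * real (card (occupied \<eta>)) + (\<Sum>z\<in>UNIV. weight \<eta> z * harm (\<eta> z))"

lemma harmonic_part_bounds:
  assumes "\<eta> \<in> config_space N" "0 < N"
  shows "0 \<le> (\<Sum>z\<in>UNIV. weight \<eta> z * harm (\<eta> z))"
    and "(\<Sum>z\<in>UNIV. weight \<eta> z * harm (\<eta> z)) \<le> real N"
proof -
  note occ = occupied_nonempty[OF assms]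
  show "0 \<le> (\<Sum>z\<in>UNIV. weight \<eta> z * harm (\<eta> z))"
    using weight_nonneg[OF occ] by (intro sum_nonneg mult_nonneg_nonneg harm_nonneg) auto
  have "(\<Sum>z\<in>UNIV. weight \<eta> z * harm (\<eta> z)) \<le> (\<Sum>z\<in>UNIV. weight \<eta> z * real N)"
    using weight_nonneg[OF occ] order_trans[OF harm_le of_nat_mono[OF config_space_le[OF assms(1)]]]
    by (intro sum_mono mult_left_mono) auto
  also have "\<dots> = real N"
    using sum_weight[OF occ] by (simp add: sum_distrib_right[symmetric])
  finally show "(\<Sum>z\<in>UNIV. weight \<eta> z * harm (\<eta> z)) \<le> real N" .
qed

lemma lyapunov_bounds:
  assumes "\<eta> \<in> config_space N" "0 < N"
  shows "0 \<le> lyapunov N \<eta>" and "lyapunov N \<eta> \<le> real (N + 1) * CARD('a) + real N"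
proof -
  have "real (card (occupied \<eta>)) \<le> CARD('a)"
    by (simp add: card_mono)
  then have "real (N + 1) * real (card (occupied \<eta>)) \<le> real (N + 1) * CARD('a)"
    by (intro mult_left_mono) auto
  moreover have "0 \<le> real (N + 1) * real (card (occupied \<eta>))"
    by simp
  ultimately show "0 \<le> lyapunov N \<eta>" "lyapunov N \<eta> \<le> real (N + 1) * CARD('a) + real N"
    using harmonic_part_bounds[OF assms] unfolding lyapunov_def by linarith+
qed

lemma lyapunov_move_le:
  assumes \<eta>: "\<eta> \<in> config_space N" "0 < N" and xy: "x \<noteq> y" "\<eta> x \<noteq> 0" "\<eta> y \<noteq> 0"
  shows "lyapunov N (move x y \<eta>) - lyapunov N \<eta>
    \<le> weight \<eta> y / (real (\<eta> y) + 1) - weight \<eta> x / real (\<eta> x)"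
proof (cases "\<eta> x = 1")
  case False
  then have same_weight: "weight (move x y \<eta>) = weight \<eta>"
    and same_occupied: "occupied (move x y \<eta>) = occupied \<eta>"
    using occupied_move[OF xy] weight_def by simp_all
  obtain k where k: "\<eta> x = Suc k"
    using xy(2) not0_implies_Suc by blast
  have "weight \<eta> z * harm (move x y \<eta> z) = weight \<eta> z * harm (\<eta> z)
      + (if z = y then weight \<eta> y / (real (\<eta> y) + 1) else 0)
      - (if z = x then weight \<eta> x / real (\<eta> x) else 0)" for z
    using xy k by (auto simp: move_def harm_Suc field_simps)
  then show ?thesis
    unfolding lyapunov_def same_weight same_occupied by (simp add: sum.distrib sum_subtractf)
next
  case True
  note occ = occupied_nonempty[OF \<eta>]
  have "x \<in> occupied \<eta>"
    using xy by (simp add: occupied_def)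
  moreover from this have "0 < card (occupied \<eta>)"
    by (auto simp: card_gt_0_iff)
  ultimately have card_move: "real (card (occupied (move x y \<eta>))) = real (card (occupied \<eta>)) - 1"
    using occupied_move[OF xy] True by (simp add: of_nat_diff)
  have "lyapunov N (move x y \<eta>) - lyapunov N \<eta> \<le> -1"
    using harmonic_part_bounds[OF \<eta>] harmonic_part_bounds[OF move_in_config_space[OF xy(1) \<eta>(1)] \<eta>(2)]
    unfolding lyapunov_def card_move right_diff_distrib by simp
  also have "\<dots> \<le> weight \<eta> y / (real (\<eta> y) + 1) - weight \<eta> x / real (\<eta> x)"
  proof -
    have "0 \<le> weight \<eta> y / (real (\<eta> y) + 1)"
      using weight_nonneg[OF occ, of y] by simp
    then show ?thesis
      using True weight_le_1[OF occ, of x] by simp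
  qed
  finally show ?thesis .
qed

lemma escape_rate_ge:
  assumes \<eta>: "\<eta> \<in> config_space N" "0 < N" "\<eta> \<notin> condensed N"
    and \<rho>: "0 < \<rho>" "\<And>x y. x \<noteq> y \<Longrightarrow> \<rho> \<le> r x y"
  shows "\<rho> / real (N + 1) \<le> (\<Sum>y\<in>UNIV. weight \<eta> y * (\<Sum>x\<in>UNIV. r x y * real (\<eta> x) / (real (\<eta> y) + 1)))"
proof -
  note occ = occupied_nonempty[OF \<eta>(1,2)]
  obtain a b where ab: "a \<noteq> b" "\<eta> a \<noteq> 0" "\<eta> b \<noteq> 0"
    using two_occupied_if_not_condensed[OF \<eta>(1,3)] by blast
  have escape: "\<rho> / real (N + 1) \<le> (\<Sum>x\<in>UNIV. r x y * real (\<eta> x) / (real (\<eta> y) + 1))"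
    if "\<eta> y \<noteq> 0" for y
  proof -
    define x where "x = (if y = a then b else a)"
    have x: "x \<noteq> y" "1 \<le> real (\<eta> x)"
      using ab that by (auto simp: x_def)
    have "real (\<eta> y) + 1 \<le> real (N + 1)"
      using config_space_le[OF \<eta>(1), of y] by simp
    with \<rho>(1) \<rho>(2)[OF x(1)] have "\<rho> / real (N + 1) \<le> r x y / (real (\<eta> y) + 1)"
      by (intro frac_le) simp_all
    also have "\<dots> \<le> r x y * real (\<eta> x) / (real (\<eta> y) + 1)"
      using x(2) rate_nonneg[of x y] by (intro divide_right_mono) (simp_all add: mult_le_cancel_left1)
    also have "\<dots> \<le> (\<Sum>x\<in>UNIV. r x y * real (\<eta> x) / (real (\<eta> y) + 1))"
      using rate_nonneg by (intro member_le_sum) simp_all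
    finally show ?thesis .
  qed
  have "weight \<eta> y * (\<rho> / real (N + 1))
      \<le> weight \<eta> y * (\<Sum>x\<in>UNIV. r x y * real (\<eta> x) / (real (\<eta> y) + 1))" for y
  proof (cases "\<eta> y = 0")
    case False
    with escape weight_nonneg[OF occ, of y] show ?thesis
      by (intro mult_left_mono)
  qed (simp add: weight_eq_0[OF occ])
  then have "(\<Sum>y\<in>UNIV. weight \<eta> y * (\<rho> / real (N + 1)))
      \<le> (\<Sum>y\<in>UNIV. weight \<eta> y * (\<Sum>x\<in>UNIV. r x y * real (\<eta> x) / (real (\<eta> y) + 1)))"
    by (rule sum_mono)
  then show ?thesis
    by (simp only: sum_distrib_right[symmetric] sum_weight[OF occ] mult_1)
qed

lemma zero_range_part_le:
  assumes \<eta>: "\<eta> \<in> config_space N" "0 < N"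
    and \<rho>: "0 < \<rho>" "\<And>x y. x \<noteq> y \<Longrightarrow> \<rho> \<le> r x y"
  shows "(\<Sum>x\<in>UNIV. \<Sum>y\<in>UNIV. real (\<eta> x) * real (\<eta> y) * r x y * (lyapunov N (move x y \<eta>) - lyapunov N \<eta>))
    \<le> - (if \<eta> \<in> condensed N then 0 else \<rho> / real (N + 1))"
proof -
  note occ = occupied_nonempty[OF \<eta>]
  have "(\<Sum>x\<in>UNIV. \<Sum>y\<in>UNIV. real (\<eta> x) * real (\<eta> y) * r x y * (lyapunov N (move x y \<eta>) - lyapunov N \<eta>))
      \<le> (\<Sum>x\<in>UNIV. \<Sum>y\<in>UNIV. real (\<eta> x) * real (\<eta> y) * r x y
            * (weight \<eta> y / (real (\<eta> y) + 1) - weight \<eta> x / real (\<eta> x)))"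
  proof (intro sum_mono)
    fix x y
    show "real (\<eta> x) * real (\<eta> y) * r x y * (lyapunov N (move x y \<eta>) - lyapunov N \<eta>)
      \<le> real (\<eta> x) * real (\<eta> y) * r x y * (weight \<eta> y / (real (\<eta> y) + 1) - weight \<eta> x / real (\<eta> x))"
    proof (cases "x = y \<or> \<eta> x = 0 \<or> \<eta> y = 0")
      case False
      then show ?thesis
        using lyapunov_move_le[OF \<eta>] rate_nonneg[of x y] by (intro mult_left_mono) auto
    qed (auto simp: rate_diag)
  qed
  also have "\<dots> = (\<Sum>x\<in>UNIV. real (\<eta> x) * (\<Sum>y\<in>UNIV. (r x y - r y x) * weight \<eta> y))
      - (\<Sum>y\<in>UNIV. weight \<eta> y * (\<Sum>x\<in>UNIV. r x y * real (\<eta> x) / (real (\<eta> y) + 1)))"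
    by (rule zero_range_drift_eq) (simp_all add: weight_eq_0[OF occ])
  also have "\<dots> \<le> - (if \<eta> \<in> condensed N then 0 else \<rho> / real (N + 1))"
  proof -
    have "real (\<eta> x) * (\<Sum>y\<in>UNIV. (r x y - r y x) * weight \<eta> y) \<le> 0" for x
      using weight_drift[OF occ, of x] by (cases "\<eta> x = 0") (simp_all add: mult_nonneg_nonpos)
    then have "(\<Sum>x\<in>UNIV. real (\<eta> x) * (\<Sum>y\<in>UNIV. (r x y - r y x) * weight \<eta> y)) \<le> 0"
      by (rule sum_nonpos)
    moreover have "0 \<le> (\<Sum>y\<in>UNIV. weight \<eta> y * (\<Sum>x\<in>UNIV. r x y * real (\<eta> x) / (real (\<eta> y) + 1)))"
      using weight_nonneg[OF occ] rate_nonneg by (intro sum_nonneg mult_nonneg_nonneg divide_nonneg_nonneg) auto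
    ultimately show ?thesis
      using escape_rate_ge[OF \<eta>, of \<rho>] \<rho> by (cases "\<eta> \<in> condensed N") auto
  qed
  finally show ?thesis .
qed

lemma inclusion_part_le:
  assumes \<eta>: "\<eta> \<in> config_space N" "0 < N"
  shows "(\<Sum>x\<in>UNIV. \<Sum>y\<in>UNIV. real (\<eta> x) * r x y * (lyapunov N (move x y \<eta>) - lyapunov N \<eta>))
    \<le> real N * (real (N + 1) * CARD('a) + real N) * (\<Sum>x\<in>UNIV. \<Sum>y\<in>UNIV. r x y)"
proof -
  define M where "M = real (N + 1) * CARD('a) + real N"
  have "0 \<le> M"
    using lyapunov_bounds[OF \<eta>] by (simp add: M_def)
  have "real (\<eta> x) * r x y * (lyapunov N (move x y \<eta>) - lyapunov N \<eta>) \<le> real N * M * r x y" for x y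
  proof (cases "x = y")
    case False
    then have "lyapunov N (move x y \<eta>) - lyapunov N \<eta> \<le> M"
      using lyapunov_bounds[OF \<eta>] lyapunov_bounds[OF move_in_config_space[OF False \<eta>(1)] \<eta>(2)]
      by (simp add: M_def)
    then have "real (\<eta> x) * r x y * (lyapunov N (move x y \<eta>) - lyapunov N \<eta>) \<le> real (\<eta> x) * r x y * M"
      using rate_nonneg[of x y] by (intro mult_left_mono) simp_all
    also have "\<dots> \<le> real N * r x y * M"
      using config_space_le[OF \<eta>(1), of x] rate_nonneg[of x y] \<open>0 \<le> M\<close>
      by (intro mult_right_mono) simp_all
    finally show ?thesis
      by (simp only: mult_ac)
  qed (simp add: rate_diag)
  then show ?thesis
    unfolding M_def[symmetric] by (simp add: sum_mono sum_distrib_left)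
qed

lemma incl_gen_lyapunov_le:
  assumes \<eta>: "\<eta> \<in> config_space N" "0 < N" and "0 \<le> dN"
    and \<rho>: "0 < \<rho>" "\<And>x y. x \<noteq> y \<Longrightarrow> \<rho> \<le> r x y"
  shows "incl_gen dN r (lyapunov N) \<eta>
    \<le> dN * (real N * (real (N + 1) * CARD('a) + real N) * (\<Sum>x\<in>UNIV. \<Sum>y\<in>UNIV. r x y))
       - (if \<eta> \<in> condensed N then 0 else \<rho> / real (N + 1))"
  unfolding incl_gen_eq[of r, OF rate_diag]
  using zero_range_part_le[OF \<eta> \<rho>] mult_left_mono[OF inclusion_part_le[OF \<eta>] \<open>0 \<le> dN\<close>]
  by linarith

lemma not_condensed_mass_le:
  assumes inv: "invariant_prob N dN r \<mu>" and "0 \<le> dN" "0 < N"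
    and \<rho>: "0 < \<rho>" "\<And>x y. x \<noteq> y \<Longrightarrow> \<rho> \<le> r x y"
  shows "(\<Sum>\<eta>\<in>config_space N - condensed N. \<mu> \<eta>)
    \<le> 4 * (real CARD('a) + 1) * (\<Sum>x\<in>UNIV. \<Sum>y\<in>UNIV. r x y) / \<rho> * (dN * real N ^ 3)"
proof -
  define m where "m = (\<Sum>\<eta>\<in>config_space N - condensed N. \<mu> \<eta>)"
  define R where "R = (\<Sum>x\<in>UNIV. \<Sum>y\<in>UNIV. r x y)"
  define n where "n = real N"
  have "m * (\<rho> / real (N + 1)) \<le> dN * (real N * (real (N + 1) * CARD('a) + real N) * R)"
    unfolding m_def R_def
    by (rule invariant_prob_drift_bound[OF inv incl_gen_lyapunov_le[OF _ \<open>0 < N\<close> \<open>0 \<le> dN\<close> \<rho>]])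
  then have "m * \<rho> \<le> dN * R * (n * ((n + 1) * CARD('a) + n) * (n + 1))"
    by (simp add: field_simps n_def)
  also have "\<dots> \<le> dN * R * (4 * (real CARD('a) + 1) * n ^ 3)"
  proof (intro mult_left_mono)
    show "n * ((n + 1) * CARD('a) + n) * (n + 1) \<le> 4 * (real CARD('a) + 1) * n ^ 3"
      using \<open>0 < N\<close> by (intro polynomial_le_four_cube) (simp_all add: n_def)
    show "0 \<le> dN * R"
      using \<open>0 \<le> dN\<close> rate_nonneg by (simp add: R_def sum_nonneg)
  qed
  finally show ?thesis
    using \<rho>(1) by (simp add: m_def R_def n_def field_simps)
qed

lemma not_condensed_mass_tendsto_0:
  assumes inv: "\<And>N. invariant_prob N (d N) r (\<mu> N)" and "\<And>N. 0 \<le> d N"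
    and "(\<lambda>N. d N * real N ^ 3) \<longlonglongrightarrow> 0"
  shows "(\<lambda>N. \<Sum>\<eta>\<in>config_space N - condensed N. \<mu> N \<eta>) \<longlonglongrightarrow> 0"
proof -
  obtain \<rho> where \<rho>: "0 < \<rho>" "\<And>x y. x \<noteq> y \<Longrightarrow> \<rho> \<le> r x y"
    using rate_lower_bound by blast
  define c where "c = 4 * (real CARD('a) + 1) * (\<Sum>x\<in>UNIV. \<Sum>y\<in>UNIV. r x y) / \<rho>"
  show ?thesis
  proof (rule tendsto_sandwich)
    show "\<forall>\<^sub>F N in sequentially. 0 \<le> (\<Sum>\<eta>\<in>config_space N - condensed N. \<mu> N \<eta>)"
      using inv by (simp add: invariant_prob_def sum_nonneg)
    show "\<forall>\<^sub>F N in sequentially. (\<Sum>\<eta>\<in>config_space N - condensed N. \<mu> N \<eta>) \<le> c * (d N * real N ^ 3)"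
      using eventually_gt_at_top[of 0]
      by eventually_elim (use not_condensed_mass_le[OF inv assms(2) _ \<rho>] in \<open>simp add: c_def\<close>)
    show "(\<lambda>N. c * (d N * real N ^ 3)) \<longlonglongrightarrow> 0"
      using tendsto_mult_right_zero[OF assms(3)] .
  qed simp
qed

end

theorem theorem3p15:
  fixes r :: "'a::finite \<Rightarrow> 'a \<Rightarrow> real"
    and d :: "nat \<Rightarrow> real"
    and \<mu> :: "nat \<Rightarrow> ('a \<Rightarrow> nat) \<Rightarrow> real"
  assumes r_pos: "\<And>x y. x \<noteq> y \<Longrightarrow> r x y > 0"
    and r_diag: "\<And>x. r x x = 0"
    and d_pos: "\<And>N. d N > 0"
    and d_lim: "(\<lambda>N. d N * real N ^ (CARD('a) + 2) * ln (real N) powr (real CARD('a) - 3))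
                  \<longlonglongrightarrow> 0"
    and mu_inv: "\<And>N. invariant_prob N (d N) r (\<mu> N)"
  shows "(\<lambda>N. \<Sum>\<eta>\<in>condensed N. \<mu> N \<eta>) \<longlonglongrightarrow> 1"
proof -
  interpret inclusion_rates r
    using r_pos r_diag by unfold_locales
  have "(\<lambda>N. \<Sum>\<eta>\<in>config_space N - condensed N. \<mu> N \<eta>) \<longlonglongrightarrow> 0"
  proof (cases "CARD('a) = 1")
    case True
    then show ?thesis
      by (simp add: config_space_diff_condensed_card_1)
  next
    case False
    then have "2 \<le> CARD('a)"
      using zero_less_card_finite[where 'a='a] by linarith
    with d_lim d_pos have "(\<lambda>N. d N * real N ^ 3) \<longlonglongrightarrow> 0"
      by (intro tendsto_cube_if_tendsto_power_ln_powr[of "CARD('a)"]) (auto intro: less_imp_le)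
    with mu_inv d_pos show ?thesis
      by (intro not_condensed_mass_tendsto_0) (auto intro: less_imp_le)
  qed
  then have "(\<lambda>N. 1 - (\<Sum>\<eta>\<in>config_space N - condensed N. \<mu> N \<eta>)) \<longlonglongrightarrow> 1"
    by (auto intro: tendsto_eq_intros)
  then show ?thesis
    using invariant_prob_mass_diff[OF mu_inv condensed_subset_config_space] by simp
qed

end
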